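(* Let $(M,d)$ be a metric space, $\mathsf{P}\subseteq M$ a set of $n$ points, and $1\le\ell\le k\le n$ integers; put $m=\lfloor k/\ell\rfloor$. Let $c\ge1$ and let $Q=\{q_1,\dots,q_m\}\subseteq\mathsf{P}$ be a $c$-approximate solution to the (non-fault-tolerant) $m$-center problem on $\mathsf{P}$, i.e. $\max_{p\in\mathsf{P}} d_Q(p,1)\le c\, r_{\mathrm{cen}}$ where $r_{\mathrm{cen}}=\min_{S\subseteq\mathsf{P},|S|=m}\max_{p\in\mathsf{P}} d_S(p,1)$. Let $C\subseteq\mathsf{P}$ be any set with $|C|=k$ and $C\supseteq\bigcup_{i=1}^m N_{\mathsf{P}}(q_i,\ell)$. Then $$\max_{p\in\mathsf{P}} d_C(p,\ell)\le (1+2c)\,r_{\mathrm{opt}},\qquad\text{where } r_{\mathrm{opt}}=\min_{C'\subseteq\mathsf{P},|C'|=k}\max_{p\in\mathsf{P}} d_{C'}(p,\ell).$$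
   Context: For a finite set $S\subseteq M$, a point $p\in M$ and an integer $1\le i\le|S|$, $d_S(p,i)$ denotes the radius of the smallest closed ball centered at $p$ containing at least $i$ points of $S$. The $i$ nearest neighbors of $p$ in $S$ are determined by ordering $s\in S$ lexicographically by $(d(p,s),\text{index of }s)$ (points of $\mathsf{P}=\{p_1,\dots,p_n\}$ are indexed); $N_S(p,i)$ is the set of the first $i$ points in this order, so $|N_S(p,i)|=i$. The fault-tolerant $k$-center cost of $C$ is $\max_{p\in\mathsf{P}} d_C(p,\ell)$; $\ell=1$ is ordinary $k$-center. *)

theory Defs
  imports "HOL-Analysis.Analysis"
begin

definition kdist :: "'a::metric_space set \<Rightarrow> 'a \<Rightarrow> nat \<Rightarrow> real" where
  "kdist S p i = Inf {r. i \<le> card {s \<in> S. dist p s \<le> r}}"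

definition nn_less :: "('a \<Rightarrow> nat) \<Rightarrow> 'a::metric_space \<Rightarrow> 'a \<Rightarrow> 'a \<Rightarrow> bool" where
  "nn_less idx p t s \<longleftrightarrow> dist p t < dist p s \<or> (dist p t = dist p s \<and> idx t < idx s)"

text \<open>N_S(p,i): the first i points of S in this order.\<close>
definition NN :: "('a \<Rightarrow> nat) \<Rightarrow> 'a::metric_space set \<Rightarrow> 'a \<Rightarrow> nat \<Rightarrow> 'a set" where
  "NN idx S p i = {s \<in> S. card {t \<in> S. nn_less idx p t s} < i}"

definition ft_cost :: "'a::metric_space set \<Rightarrow> 'a set \<Rightarrow> nat \<Rightarrow> real" where
  "ft_cost P C l = Max ((\<lambda>p. kdist C p l) ` P)"

definition ft_opt :: "'a::metric_space set \<Rightarrow> nat \<Rightarrow> nat \<Rightarrow> real" where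
  "ft_opt P k l = Min {ft_cost P C' l | C'. C' \<subseteq> P \<and> card C' = k}"

end

theory Submission
  imports Defs
begin

text \<open>
  Let \<open>r\<close> be the optimal fault-tolerant radius and \<open>C\<^sup>*\<close> an optimal solution, so every point
  of \<open>P\<close> has \<open>\<ell>\<close> points of \<open>C\<^sup>*\<close> within distance \<open>r\<close>. A greedy \<open>2r\<close>-separated net \<open>T\<close> of \<open>P\<close>
  has pairwise disjoint \<open>r\<close>-balls, each containing \<open>\<ell>\<close> points of \<open>C\<^sup>*\<close>, hence \<open>|T| \<le> k/\<ell>\<close>; as \<open>T\<close>
  covers \<open>P\<close> within \<open>2r\<close>, the optimal \<open>\<lfloor>k/\<ell>\<rfloor>\<close>-center radius is at most \<open>2r\<close>. So every
  \<open>p\<close> has some \<open>q \<in> Q\<close> with \<open>d(p,q) \<le> 2cr\<close>, and the \<open>\<ell>\<close> nearest neighbours of \<open>q\<close>, all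
  lying in \<open>C\<close>, are within \<open>d_P(q,\<ell>) \<le> r\<close> of \<open>q\<close>, hence within \<open>(1+2c)r\<close> of \<open>p\<close>.
\<close>

lemma bdd_below_kdist_radii:
  assumes "1 \<le> i"
  shows "bdd_below {r. i \<le> card {s\<in>S. dist p s \<le> r}}"
proof (rule bdd_belowI)
  fix x assume "x \<in> {r. i \<le> card {s\<in>S. dist p s \<le> r}}"
  then have "card {s\<in>S. dist p s \<le> x} \<noteq> 0" using assms by simp
  then have "{s\<in>S. dist p s \<le> x} \<noteq> {}" by force
  then show "0 \<le> x" using zero_le_dist order_trans by blast
qed

lemma kdist_le:
  assumes "1 \<le> i" "i \<le> card {s\<in>S. dist p s \<le> r}"
  shows "kdist S p i \<le> r"
  unfolding kdist_def using assms by (intro cInf_lower bdd_below_kdist_radii) auto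

text \<open>The infimum is attained because only the finitely many values \<open>dist p ` S\<close> matter:
  just above \<open>kdist\<close>, but below the next larger distance, the ball already has \<open>i\<close> points.\<close>

lemma kdist_attained:
  assumes "finite S" "1 \<le> i" "i \<le> card S"
  shows "i \<le> card {s\<in>S. dist p s \<le> kdist S p i}"
proof -
  define A where "A = {r. i \<le> card {s\<in>S. dist p s \<le> r}}"
  define \<rho> where "\<rho> = kdist S p i"
  have "{s\<in>S. dist p s \<le> Max (dist p ` S)} = S"
    using assms(1) by auto
  then have "Max (dist p ` S) \<in> A"
    using assms(3) by (simp add: A_def)
  then have A_ne: "A \<noteq> {}" by auto
  have A_bdd: "bdd_below A"
    unfolding A_def by (rule bdd_below_kdist_radii[OF assms(2)])
  have above: "r \<in> A" if "\<rho> < r" for r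
  proof -
    have "Inf A < r" using that by (simp add: \<rho>_def kdist_def A_def)
    then obtain a where a: "a \<in> A" "a < r"
      using cInf_less_iff[OF A_ne A_bdd] by auto
    have "card {s\<in>S. dist p s \<le> a} \<le> card {s\<in>S. dist p s \<le> r}"
      using assms(1) a(2) by (intro card_mono) auto
    then show ?thesis using a(1) by (simp add: A_def)
  qed
  define D where "D = {d \<in> dist p ` S. \<rho> < d}"
  define r where "r = (if D = {} then \<rho> + 1 else (\<rho> + Min D) / 2)"
  have "finite D" using assms(1) by (simp add: D_def)
  have r: "\<rho> < r \<and> (\<forall>d\<in>D. r < d)"
  proof (cases "D = {}")
    case False
    then have "Min D \<in> D" using \<open>finite D\<close> by (rule Min_in[rotated])
    then have "\<rho> < Min D" by (simp add: D_def)
    moreover have "\<forall>d\<in>D. Min D \<le> d" using \<open>finite D\<close> by simp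
    ultimately show ?thesis using False by (force simp: r_def)
  qed (simp add: r_def)
  have "{s\<in>S. dist p s \<le> r} \<subseteq> {s\<in>S. dist p s \<le> \<rho>}"
  proof clarify
    fix s assume "s \<in> S" "dist p s \<le> r"
    then show "dist p s \<le> \<rho>" using r by (force simp: D_def)
  qed
  then have "card {s\<in>S. dist p s \<le> r} \<le> card {s\<in>S. dist p s \<le> \<rho>}"
    using assms(1) by (intro card_mono) auto
  moreover have "i \<le> card {s\<in>S. dist p s \<le> r}"
    using above r by (simp add: A_def)
  ultimately show ?thesis by (simp add: \<rho>_def)
qed

lemma kdist_nonneg:
  assumes "finite S" "1 \<le> i" "i \<le> card S"
  shows "0 \<le> kdist S p i"
proof -
  have "{s\<in>S. dist p s \<le> kdist S p i} \<noteq> {}"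
    using kdist_attained[OF assms, of p] assms(2) by (metis card.empty not_one_le_zero order_trans)
  then show ?thesis using zero_le_dist order_trans by blast
qed

lemma kdist_one_le:
  assumes "s \<in> S" "dist p s \<le> r" "finite S"
  shows "kdist S p 1 \<le> r"
proof (rule kdist_le[OF order_refl])
  have "{t\<in>S. dist p t \<le> r} \<noteq> {}" using assms(1,2) by blast
  then show "1 \<le> card {t\<in>S. dist p t \<le> r}"
    using assms(3) by (simp add: Suc_le_eq card_gt_0_iff)
qed

lemma nearest_point_kdist:
  assumes "finite S" "S \<noteq> {}"
  obtains s where "s \<in> S" "dist p s \<le> kdist S p 1"
proof -
  have "1 \<le> card S" using assms by (simp add: Suc_le_eq card_gt_0_iff)
  then have "1 \<le> card {s\<in>S. dist p s \<le> kdist S p 1}"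
    using kdist_attained[OF assms(1) order_refl] by blast
  then have "card {s\<in>S. dist p s \<le> kdist S p 1} \<noteq> 0" by simp
  then have "{s\<in>S. dist p s \<le> kdist S p 1} \<noteq> {}" by (metis card.empty)
  with that show ?thesis by blast
qed

lemma kdist_superset_le:
  assumes "finite P" "S \<subseteq> P" "1 \<le> i" "i \<le> card S"
  shows "kdist P p i \<le> kdist S p i"
proof (rule kdist_le[OF assms(3)])
  have "finite S" using assms(1,2) finite_subset by blast
  then have "i \<le> card {s\<in>S. dist p s \<le> kdist S p i}"
    using kdist_attained assms(3,4) by blast
  also have "\<dots> \<le> card {s\<in>P. dist p s \<le> kdist S p i}"
    using assms(1,2) by (intro card_mono) auto
  finally show "i \<le> card {s\<in>P. dist p s \<le> kdist S p i}" .
qed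

subsection \<open>Nearest neighbours\<close>

lemma bij_betw_rank:
  fixes lt :: "'a \<Rightarrow> 'a \<Rightarrow> bool"
  assumes "finite P"
    and irrefl: "\<And>s. \<not> lt s s"
    and trans: "\<And>a b c. lt a b \<Longrightarrow> lt b c \<Longrightarrow> lt a c"
    and total: "\<And>s t. s \<in> P \<Longrightarrow> t \<in> P \<Longrightarrow> s \<noteq> t \<Longrightarrow> lt s t \<or> lt t s"
  shows "bij_betw (\<lambda>s. card {t\<in>P. lt t s}) P {..<card P}"
proof -
  define rank where "rank s = card {t\<in>P. lt t s}" for s
  have less: "rank t < rank s" if "t \<in> P" "lt t s" for t s
  proof -
    have "{u\<in>P. lt u t} \<subset> {u\<in>P. lt u s}"
      using that trans irrefl by blast
    then show ?thesis unfolding rank_def using assms(1) by (intro psubset_card_mono) auto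
  qed
  have inj: "inj_on rank P"
    by (rule inj_onI) (metis less total less_irrefl)
  have "rank ` P \<subseteq> {..<card P}"
  proof
    fix x assume "x \<in> rank ` P"
    then obtain s where s: "s \<in> P" "x = rank s" by auto
    have "{t\<in>P. lt t s} \<subset> P" using s irrefl by auto
    then show "x \<in> {..<card P}" unfolding s rank_def using assms(1) by (auto intro: psubset_card_mono)
  qed
  then have "rank ` P = {..<card P}"
    using card_subset_eq card_image[OF inj] by (metis card_lessThan finite_lessThan)
  with inj show ?thesis unfolding rank_def bij_betw_def by simp
qed

lemma card_rank_less:
  fixes lt :: "'a \<Rightarrow> 'a \<Rightarrow> bool"
  assumes "finite P" "l \<le> card P"
    and "\<And>s. \<not> lt s s"
    and "\<And>a b c. lt a b \<Longrightarrow> lt b c \<Longrightarrow> lt a c"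
    and "\<And>s t. s \<in> P \<Longrightarrow> t \<in> P \<Longrightarrow> s \<noteq> t \<Longrightarrow> lt s t \<or> lt t s"
  shows "card {s\<in>P. card {t\<in>P. lt t s} < l} = l"
proof -
  let ?rank = "\<lambda>s. card {t\<in>P. lt t s}"
  have bij: "bij_betw ?rank P {..<card P}"
    using bij_betw_rank[OF assms(1,3-5)] .
  have "bij_betw ?rank {s\<in>P. ?rank s < l} {..<l}"
  proof (rule bij_betw_subset[OF bij])
    have image: "?rank ` P = {..<card P}"
      using bij by (simp add: bij_betw_def)
    show "?rank ` {s\<in>P. ?rank s < l} = {..<l}"
    proof
      show "{..<l} \<subseteq> ?rank ` {s\<in>P. ?rank s < l}"
      proof
        fix x assume x: "x \<in> {..<l}"
        then have "x \<in> ?rank ` P" using image assms(2) by auto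
        with x show "x \<in> ?rank ` {s\<in>P. ?rank s < l}" by auto
      qed
    qed auto
  qed auto
  then show ?thesis by (simp add: bij_betw_same_card)
qed

lemma card_NN:
  assumes "finite P" "inj_on idx P" "l \<le> card P"
  shows "card (NN idx P q l) = l"
  unfolding NN_def
proof (rule card_rank_less[OF assms(1,3)])
  show "\<And>s t. s \<in> P \<Longrightarrow> t \<in> P \<Longrightarrow> s \<noteq> t \<Longrightarrow> nn_less idx q s t \<or> nn_less idx q t s"
    using assms(2) unfolding nn_less_def inj_on_def by (metis linorder_neqE_linordered_idom nat_neq_iff)
qed (auto simp: nn_less_def)

lemma dist_NN_le_kdist:
  assumes "finite P" "1 \<le> l" "l \<le> card P" "s \<in> NN idx P q l"
  shows "dist q s \<le> kdist P q l"
proof (rule ccontr)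
  assume far: "\<not> dist q s \<le> kdist P q l"
  have "l \<le> card {t\<in>P. dist q t \<le> kdist P q l}"
    using kdist_attained assms(1-3) by blast
  also have "\<dots> \<le> card {t\<in>P. nn_less idx q t s}"
    using far assms(1) by (intro card_mono) (auto simp: nn_less_def)
  finally show False using assms(4) by (simp add: NN_def)
qed

lemma kdist_le_via_NN:
  assumes "finite P" "1 \<le> l" "l \<le> card P" "finite C" "NN idx P q l \<subseteq> C" "inj_on idx P"
  shows "kdist C p l \<le> dist p q + kdist P q l"
proof (rule kdist_le[OF assms(2)])
  have "NN idx P q l \<subseteq> {s\<in>C. dist p s \<le> dist p q + kdist P q l}"
  proof
    fix s assume s: "s \<in> NN idx P q l"
    have "dist q s \<le> kdist P q l" by (rule dist_NN_le_kdist[OF assms(1-3) s])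
    then show "s \<in> {s\<in>C. dist p s \<le> dist p q + kdist P q l}"
      using s assms(5) dist_triangle[of p s q] by auto
  qed
  then have "card (NN idx P q l) \<le> card {s\<in>C. dist p s \<le> dist p q + kdist P q l}"
    using assms(4) by (intro card_mono) auto
  then show "l \<le> card {s\<in>C. dist p s \<le> dist p q + kdist P q l}"
    using card_NN[OF assms(1,6,3)] by simp
qed

lemma kdist_le_ft_cost:
  assumes "finite P" "p \<in> P"
  shows "kdist C p l \<le> ft_cost P C l"
  unfolding ft_cost_def using assms by (intro Max_ge) auto

lemma ft_cost_le:
  assumes "finite P" "P \<noteq> {}" "\<And>p. p \<in> P \<Longrightarrow> kdist C p l \<le> r"
  shows "ft_cost P C l \<le> r"
  unfolding ft_cost_def using assms by (subst Max_le_iff) auto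

lemma finite_ft_costs:
  assumes "finite P"
  shows "finite {ft_cost P C l | C. C \<subseteq> P \<and> card C = k}"
proof -
  have "finite {C. C \<subseteq> P \<and> card C = k}"
  proof (rule finite_subset)
    show "{C. C \<subseteq> P \<and> card C = k} \<subseteq> Pow P" by blast
  qed (simp add: assms)
  then have "finite ((\<lambda>C. ft_cost P C l) ` {C. C \<subseteq> P \<and> card C = k})"
    by (rule finite_imageI)
  moreover have "(\<lambda>C. ft_cost P C l) ` {C. C \<subseteq> P \<and> card C = k}
      = {ft_cost P C l | C. C \<subseteq> P \<and> card C = k}"
    by auto
  ultimately show ?thesis by simp
qed

lemma ft_opt_le_ft_cost:
  assumes "finite P" "C \<subseteq> P" "card C = k"
  shows "ft_opt P k l \<le> ft_cost P C l"
  unfolding ft_opt_def using assms by (intro Min_le[OF finite_ft_costs]) auto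

lemma ft_opt_attained:
  assumes "finite P" "k \<le> card P"
  obtains C where "C \<subseteq> P" "card C = k" "ft_cost P C l = ft_opt P k l"
proof -
  obtain C where "C \<subseteq> P" "card C = k"
    using obtain_subset_with_card_n[OF assms(2)] by metis
  then have "{ft_cost P C l | C. C \<subseteq> P \<and> card C = k} \<noteq> {}" by auto
  then have "ft_opt P k l \<in> {ft_cost P C l | C. C \<subseteq> P \<and> card C = k}"
    unfolding ft_opt_def by (rule Min_in[OF finite_ft_costs[OF assms(1)]])
  then obtain C where "C \<subseteq> P" "card C = k" "ft_opt P k l = ft_cost P C l"
    by auto
  then show ?thesis using that by simp
qed

lemma kdist_le_ft_opt:
  assumes "finite P" "1 \<le> l" "l \<le> k" "k \<le> card P" "q \<in> P"
  shows "kdist P q l \<le> ft_opt P k l"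
proof -
  obtain C where C: "C \<subseteq> P" "card C = k" "ft_cost P C l = ft_opt P k l"
    using ft_opt_attained[OF assms(1,4)] .
  have "kdist P q l \<le> kdist C q l"
    using assms(3) C(2) by (intro kdist_superset_le[OF assms(1) C(1) assms(2)]) simp
  also have "\<dots> \<le> ft_opt P k l"
    unfolding C(3)[symmetric] by (rule kdist_le_ft_cost[OF assms(1,5)])
  finally show ?thesis .
qed

lemma ft_opt_nonneg:
  assumes "finite P" "1 \<le> l" "l \<le> k" "k \<le> card P"
  shows "0 \<le> ft_opt P k l"
proof -
  have "P \<noteq> {}" using assms(2-4) by auto
  then obtain p where p: "p \<in> P" by blast
  have "0 \<le> kdist P p l"
    using assms(3,4) by (intro kdist_nonneg[OF assms(1,2)]) simp
  also have "\<dots> \<le> ft_opt P k l"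
    by (rule kdist_le_ft_opt[OF assms p])
  finally show ?thesis .
qed

subsection \<open>Separated nets\<close>

lemma exists_separated_net:
  fixes P :: "'a::metric_space set"
  assumes "finite P" "0 \<le> \<delta>"
  obtains T where "T \<subseteq> P" "\<And>x y. x \<in> T \<Longrightarrow> y \<in> T \<Longrightarrow> x \<noteq> y \<Longrightarrow> \<delta> < dist x y"
    "\<And>p. p \<in> P \<Longrightarrow> \<exists>t\<in>T. dist p t \<le> \<delta>"
proof -
  have "\<exists>T\<subseteq>P. (\<forall>x\<in>T. \<forall>y\<in>T. x \<noteq> y \<longrightarrow> \<delta> < dist x y) \<and> (\<forall>p\<in>P. \<exists>t\<in>T. dist p t \<le> \<delta>)"
    using assms(1)
  proof (induction P rule: finite_induct)
    case empty
    show ?case by simp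
  next
    case (insert x P)
    then obtain T where T: "T \<subseteq> P" "\<forall>x\<in>T. \<forall>y\<in>T. x \<noteq> y \<longrightarrow> \<delta> < dist x y"
      "\<forall>p\<in>P. \<exists>t\<in>T. dist p t \<le> \<delta>" by blast
    show ?case
    proof (cases "\<exists>t\<in>T. dist x t \<le> \<delta>")
      case True
      with T have "T \<subseteq> insert x P" "\<forall>p\<in>insert x P. \<exists>t\<in>T. dist p t \<le> \<delta>"
        by auto
      with T(2) show ?thesis by (intro exI[of _ T]) simp
    next
      case False
      then have far: "\<forall>t\<in>T. \<delta> < dist x t \<and> \<delta> < dist t x"
        by (simp add: not_le dist_commute)
      have "\<forall>y\<in>insert x T. \<forall>z\<in>insert x T. y \<noteq> z \<longrightarrow> \<delta> < dist y z"
        using T(2) far by auto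
      moreover have "\<forall>p\<in>insert x P. \<exists>t\<in>insert x T. dist p t \<le> \<delta>"
        using T(3) assms(2) by auto
      ultimately show ?thesis
        using T(1) by (intro exI[of _ "insert x T"]) auto
    qed
  qed
  then obtain T where "T \<subseteq> P" "\<forall>x\<in>T. \<forall>y\<in>T. x \<noteq> y \<longrightarrow> \<delta> < dist x y"
    "\<forall>p\<in>P. \<exists>t\<in>T. dist p t \<le> \<delta>" by blast
  then show ?thesis by (intro that) auto
qed

text \<open>Balls of radius \<open>r\<close> around \<open>2r\<close>-separated centres are disjoint.\<close>

lemma card_separated_mult_le:
  assumes "finite C"
    and sep: "\<And>x y. x \<in> T \<Longrightarrow> y \<in> T \<Longrightarrow> x \<noteq> y \<Longrightarrow> 2 * r < dist x y"
    and dense: "\<And>t. t \<in> T \<Longrightarrow> l \<le> card {s\<in>C. dist t s \<le> r}"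
  shows "card T * l \<le> card C"
proof (cases "finite T")
  case True
  define B where "B t = {s\<in>C. dist t s \<le> r}" for t
  have disjoint: "B t \<inter> B t' = {}" if "t \<in> T" "t' \<in> T" "t \<noteq> t'" for t t'
  proof -
    have "\<not> (dist t s \<le> r \<and> dist t' s \<le> r)" for s
      using sep[OF that] dist_triangle2[of t t' s] by linarith
    then show ?thesis by (auto simp: B_def)
  qed
  have "card T * l = (\<Sum>t\<in>T. l)" by simp
  also have "\<dots> \<le> (\<Sum>t\<in>T. card (B t))"
    using dense by (intro sum_mono) (simp add: B_def)
  also have "\<dots> = card (\<Union>t\<in>T. B t)"
    using True assms(1) disjoint by (intro card_UN_disjoint[symmetric]) (auto simp: B_def)
  also have "\<dots> \<le> card C"
    using assms(1) by (intro card_mono) (auto simp: B_def)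
  finally show ?thesis .
qed simp

lemma ft_opt_center_le:
  assumes "finite P" "1 \<le> l" "l \<le> k" "k \<le> card P"
  shows "ft_opt P (k div l) 1 \<le> 2 * ft_opt P k l"
proof -
  define r where "r = ft_opt P k l"
  obtain C where C: "C \<subseteq> P" "card C = k" "ft_cost P C l = r"
    using ft_opt_attained[OF assms(1,4)] unfolding r_def .
  have "finite C" using C(1) assms(1) finite_subset by blast
  have nonneg: "0 \<le> 2 * r" unfolding r_def using ft_opt_nonneg[OF assms] by simp
  obtain T where T: "T \<subseteq> P" "\<And>x y. x \<in> T \<Longrightarrow> y \<in> T \<Longrightarrow> x \<noteq> y \<Longrightarrow> 2 * r < dist x y"
    "\<And>p. p \<in> P \<Longrightarrow> \<exists>t\<in>T. dist p t \<le> 2 * r"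
    using exists_separated_net[OF assms(1) nonneg] by blast
  have dense: "l \<le> card {s\<in>C. dist t s \<le> r}" if "t \<in> T" for t
  proof -
    have "l \<le> card {s\<in>C. dist t s \<le> kdist C t l}"
      using kdist_attained[OF \<open>finite C\<close> assms(2)] assms(3) C(2) by simp
    also have "\<dots> \<le> card {s\<in>C. dist t s \<le> r}"
    proof (rule card_mono)
      have "kdist C t l \<le> r"
        unfolding C(3)[symmetric] using T(1) that by (intro kdist_le_ft_cost[OF assms(1)]) blast
      then show "{s\<in>C. dist t s \<le> kdist C t l} \<subseteq> {s\<in>C. dist t s \<le> r}" by auto
    qed (use \<open>finite C\<close> in simp)
    finally show ?thesis .
  qed
  have "card T * l \<le> k"
    using card_separated_mult_le[OF \<open>finite C\<close> T(2) dense] unfolding C(2) .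
  then have "card T \<le> k div l"
    using assms(2) by (simp add: less_eq_div_iff_mult_less_eq)
  moreover have "k div l \<le> card P"
    using assms(4) div_le_dividend le_trans by blast
  ultimately have "\<exists>T'. T \<subseteq> T' \<and> T' \<subseteq> P \<and> card T' = k div l"
    using T(1) assms(1) by (rule exists_subset_between)
  then obtain T' where T': "T \<subseteq> T'" "T' \<subseteq> P" "card T' = k div l"
    by blast
  have "ft_cost P T' 1 \<le> 2 * r"
  proof (rule ft_cost_le[OF assms(1)])
    show "P \<noteq> {}" using assms(2-4) by auto
    fix p assume "p \<in> P"
    then obtain t where "t \<in> T'" "dist p t \<le> 2 * r" using T(3) T'(1) by blast
    moreover have "finite T'" using T'(2) assms(1) finite_subset by blast
    ultimately show "kdist T' p 1 \<le> 2 * r" by (rule kdist_one_le)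
  qed
  with ft_opt_le_ft_cost[OF assms(1) T'(2,3), of 1] show ?thesis
    unfolding r_def by linarith
qed

theorem theorem2:
  fixes P Q C :: "'a::metric_space set" and idx :: "'a \<Rightarrow> nat"
    and l k :: nat and c :: real
  assumes "finite P" and "inj_on idx P"
    and "1 \<le> l" and "l \<le> k" and "k \<le> card P"
    and "c \<ge> 1"
    and "Q \<subseteq> P" and "card Q = k div l"
    and "ft_cost P Q 1 \<le> c * ft_opt P (k div l) 1"
    and "C \<subseteq> P" and "card C = k"
    and "(\<Union>q\<in>Q. NN idx P q l) \<subseteq> C"
  shows "ft_cost P C l \<le> (1 + 2 * c) * ft_opt P k l"
proof (rule ft_cost_le[OF assms(1)])
  let ?r = "ft_opt P k l"
  show "P \<noteq> {}" using assms(3-5) by auto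
  fix p assume p: "p \<in> P"
  have "finite Q" "finite C" using assms(1,7,10) finite_subset by blast+
  moreover have "card Q \<noteq> 0"
    using assms(3,4,8) by (simp add: div_greater_zero_iff)
  then have "Q \<noteq> {}" by auto
  ultimately obtain q where q: "q \<in> Q" "dist p q \<le> kdist Q p 1"
    using nearest_point_kdist by blast
  have "dist p q \<le> ft_cost P Q 1"
    using q(2) kdist_le_ft_cost[OF assms(1) p, of Q 1] by linarith
  also have "\<dots> \<le> c * (2 * ?r)"
    using assms(6,9) ft_opt_center_le[OF assms(1,3-5)] by (simp add: order_trans)
  finally have "dist p q \<le> 2 * c * ?r" by simp
  moreover have "kdist C p l \<le> dist p q + kdist P q l"
    using q(1) assms(4,5,7,12) by (intro kdist_le_via_NN[OF assms(1,3) _ \<open>finite C\<close> _ assms(2)]) auto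
  moreover have "kdist P q l \<le> ?r"
    using q(1) assms(7) by (intro kdist_le_ft_opt[OF assms(1,3-5)]) blast
  ultimately show "kdist C p l \<le> (1 + 2 * c) * ?r"
    by (simp add: algebra_simps)
qed

end
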